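(* Let $w\in W$ and $\gamma\in\mathrm{maxinv}(w)$. Then $w\to s_\gamma w$ is a quantum edge of $\mathrm{QB}(W)$; that is, writing $s_\gamma w=ws_{\beta}$ with $\beta=-w^{-1}\gamma\in\Phi^+$, we have $\ell(ws_\beta)=\ell(w)+1-\langle\beta^\vee,2\rho\rangle$.
   Context: $\Phi$ is a reduced crystallographic finite root system with fixed basis $\Delta$, positive roots $\Phi^+$, negative roots $\Phi^-=-\Phi^+$, Weyl group $W$ with Coxeter length $\ell$, and $2\rho=\sum_{\beta\in\Phi^+}\beta$. For roots $\gamma,\alpha$ write $\gamma\le\alpha$ if $\alpha-\gamma$ is a $\mathbb Z_{\ge0}$-combination of positive roots. For $w\in W$: $\mathrm{inv}(w)=\{\alpha\in\Phi^+:w^{-1}\alpha\in\Phi^-\}$, and $\gamma\in\mathrm{inv}(w)$ is a maximal inversion, $\gamma\in\mathrm{maxinv}(w)$, if there is no $\alpha\in\mathrm{inv}(w)$ with $\alpha\ne\gamma$ and $\gamma\le\alpha$. The quantum Bruhat graph $\mathrm{QB}(W)$ has vertex set $W$ and an edge $u\to us_\beta$ ($\beta\in\Phi^+$) if $\ell(us_\beta)=\ell(u)+1$ (Bruhat edge) or $\ell(us_\beta)=\ell(u)+1-\langle\beta^\vee,2\rho\rangle$ (quantum edge). *)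

theory Defs
  imports "HOL-Analysis.Analysis"
begin

definition refl :: "'a::real_inner \<Rightarrow> 'a \<Rightarrow> 'a" where
  "refl \<alpha> x = x - ((2 * (x \<bullet> \<alpha>)) / (\<alpha> \<bullet> \<alpha>)) *\<^sub>R \<alpha>"

definition coroot :: "'a::real_inner \<Rightarrow> 'a" where
  "coroot \<alpha> = (2 / (\<alpha> \<bullet> \<alpha>)) *\<^sub>R \<alpha>"

definition root_system :: "'a::euclidean_space set \<Rightarrow> bool" where
  "root_system \<Phi> \<longleftrightarrow>
     finite \<Phi> \<and> 0 \<notin> \<Phi> \<and>
     (\<forall>\<alpha>\<in>\<Phi>. \<forall>\<beta>\<in>\<Phi>. refl \<alpha> \<beta> \<in> \<Phi>) \<and>
     (\<forall>\<alpha>\<in>\<Phi>. \<forall>\<beta>\<in>\<Phi>. 2 * (\<beta> \<bullet> \<alpha>) / (\<alpha> \<bullet> \<alpha>) \<in> \<int>) \<and>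
     (\<forall>\<alpha>\<in>\<Phi>. \<forall>c::real. c *\<^sub>R \<alpha> \<in> \<Phi> \<longrightarrow> c = 1 \<or> c = -1)"

definition root_basis :: "'a::euclidean_space set \<Rightarrow> 'a set \<Rightarrow> bool" where
  "root_basis \<Phi> \<Delta> \<longleftrightarrow>
     \<Delta> \<subseteq> \<Phi> \<and> independent \<Delta> \<and>
     (\<forall>\<beta>\<in>\<Phi>. \<exists>c::'a \<Rightarrow> int. \<beta> = (\<Sum>\<alpha>\<in>\<Delta>. of_int (c \<alpha>) *\<^sub>R \<alpha>) \<and>
                 ((\<forall>\<alpha>\<in>\<Delta>. c \<alpha> \<ge> 0) \<or> (\<forall>\<alpha>\<in>\<Delta>. c \<alpha> \<le> 0)))"

definition pos_roots :: "'a::euclidean_space set \<Rightarrow> 'a set \<Rightarrow> 'a set" where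
  "pos_roots \<Phi> \<Delta> = {\<beta>\<in>\<Phi>. \<exists>c::'a \<Rightarrow> int. \<beta> = (\<Sum>\<alpha>\<in>\<Delta>. of_int (c \<alpha>) *\<^sub>R \<alpha>) \<and> (\<forall>\<alpha>\<in>\<Delta>. c \<alpha> \<ge> 0)}"

definition neg_roots :: "'a::euclidean_space set \<Rightarrow> 'a set \<Rightarrow> 'a set" where
  "neg_roots \<Phi> \<Delta> = uminus ` pos_roots \<Phi> \<Delta>"

definition two_rho :: "'a::euclidean_space set \<Rightarrow> 'a set \<Rightarrow> 'a" where
  "two_rho \<Phi> \<Delta> = (\<Sum>\<beta>\<in>pos_roots \<Phi> \<Delta>. \<beta>)"

definition refl_word :: "'a::real_inner list \<Rightarrow> 'a \<Rightarrow> 'a" where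
  "refl_word xs = foldr (\<circ>) (map refl xs) id"

definition weyl_group :: "'a::euclidean_space set \<Rightarrow> ('a \<Rightarrow> 'a) set" where
  "weyl_group \<Phi> = {refl_word xs | xs. set xs \<subseteq> \<Phi>}"

definition wlength :: "'a::euclidean_space set \<Rightarrow> ('a \<Rightarrow> 'a) \<Rightarrow> nat" where
  "wlength \<Delta> w = (LEAST n. \<exists>xs. length xs = n \<and> set xs \<subseteq> \<Delta> \<and> w = refl_word xs)"

definition root_le :: "'a::euclidean_space set \<Rightarrow> 'a set \<Rightarrow> 'a \<Rightarrow> 'a \<Rightarrow> bool" where
  "root_le \<Phi> \<Delta> \<gamma> \<alpha> \<longleftrightarrow>
     (\<exists>c::'a \<Rightarrow> nat. \<alpha> - \<gamma> = (\<Sum>\<beta>\<in>pos_roots \<Phi> \<Delta>. of_nat (c \<beta>) *\<^sub>R \<beta>))"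

definition inversions :: "'a::euclidean_space set \<Rightarrow> 'a set \<Rightarrow> ('a \<Rightarrow> 'a) \<Rightarrow> 'a set" where
  "inversions \<Phi> \<Delta> w = {\<alpha>\<in>pos_roots \<Phi> \<Delta>. inv w \<alpha> \<in> neg_roots \<Phi> \<Delta>}"

definition maxinv :: "'a::euclidean_space set \<Rightarrow> 'a set \<Rightarrow> ('a \<Rightarrow> 'a) \<Rightarrow> 'a set" where
  "maxinv \<Phi> \<Delta> w = {\<gamma>\<in>inversions \<Phi> \<Delta> w.
      \<not> (\<exists>\<alpha>\<in>inversions \<Phi> \<Delta> w. \<alpha> \<noteq> \<gamma> \<and> root_le \<Phi> \<Delta> \<gamma> \<alpha>)}"

definition quantum_edge :: "'a::euclidean_space set \<Rightarrow> 'a set \<Rightarrow> ('a \<Rightarrow> 'a) \<Rightarrow> 'a \<Rightarrow> bool" where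
  "quantum_edge \<Phi> \<Delta> u \<beta> \<longleftrightarrow> \<beta> \<in> pos_roots \<Phi> \<Delta> \<and>
     real (wlength \<Delta> (u \<circ> refl \<beta>)) = real (wlength \<Delta> u) + 1 - coroot \<beta> \<bullet> two_rho \<Phi> \<Delta>"

end

theory Submission
  imports Defs
begin

text \<open>
  Write \<open>I\<close> and \<open>I'\<close> for the inversion sets of \<open>w\<close> and of \<open>s\<^sub>\<gamma> w = w s\<^sub>\<beta>\<close>.
  The Coxeter length is the number of inversions (the exchange property makes every reduced
  word count them), and \<open>w(2\<rho>) = \<Sum>\<^sub>a \<plusminus>a\<close> over the positive roots with sign \<open>-\<close>
  exactly on \<open>I\<close>; so \<open>\<langle>\<beta>\<^sup>\<or>, 2\<rho>\<rangle> = \<Sum>\<^sub>a \<plusminus>\<langle>a, \<gamma>\<^sup>\<or>\<rangle>\<close> with sign \<open>+\<close> on \<open>I\<close>,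
  and it remains to show \<open>|I'| = |I| + 1 - \<Sum>\<^sub>a \<plusminus>\<langle>a, \<gamma>\<^sup>\<or>\<rangle>\<close>.

  Pair each positive root \<open>a \<noteq> \<gamma>\<close> with \<open>|s\<^sub>\<gamma> a|\<close>. If \<open>s\<^sub>\<gamma> a\<close> is positive and
  \<open>\<langle>a, \<gamma>\<^sup>\<or>\<rangle> \<noteq> 0\<close>, one of \<open>a, s\<^sub>\<gamma> a\<close> lies above \<open>\<gamma>\<close>, and maximality keeps both
  out of \<open>I\<close> and \<open>I'\<close>. If \<open>s\<^sub>\<gamma> a\<close> is negative, \<open>a\<close> or \<open>-s\<^sub>\<gamma> a\<close> is in \<open>I\<close>,
  and both are in \<open>I\<close> only when \<open>\<langle>a, \<gamma>\<^sup>\<or>\<rangle> = 1\<close>: otherwise the root \<open>a - \<gamma>\<close> would put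
  \<open>a\<close> or \<open>-s\<^sub>\<gamma> a\<close> above \<open>\<gamma>\<close>. Either way the pair contributes nothing, while
  \<open>\<gamma>\<close> itself contributes \<open>1\<close>.
\<close>

section \<open>Reflections and the Weyl group\<close>

lemma refl_linear: "linear (refl a)"
  unfolding refl_def
  by (intro linear_compose_sub linear_ident)
     (auto intro!: linear_scaleR_left bounded_linear.linear bounded_linear_inner_left
       simp: linear_iff inner_add_left algebra_simps add_divide_distrib)

lemma refl_zero [simp]: "refl 0 = id"
  by (auto simp: refl_def)

lemma refl_self: "refl a a = - a"
  by (cases "a = 0") (auto simp: refl_def scaleR_2)

lemma refl_uminus [simp]: "refl (- a) = refl a"
  by (auto simp: refl_def fun_eq_iff)

lemma refl_inner_refl: "refl a x \<bullet> refl a y = x \<bullet> y"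
  by (cases "a = 0")
     (simp_all add: refl_def inner_diff_left inner_diff_right inner_commute field_simps)

lemma refl_refl [simp]: "refl a (refl a x) = x"
proof (cases "a = 0")
  case False
  then have "refl a x \<bullet> a = - (x \<bullet> a)"
    by (simp add: refl_def inner_diff_left field_simps)
  then show ?thesis
    by (simp add: refl_def[of a "refl a x"]) (simp add: refl_def)
qed simp

lemma inv_refl: "inv (refl a) = refl a"
  by (rule inv_unique_comp) (simp_all add: fun_eq_iff)

lemma orthogonal_transformation_refl: "orthogonal_transformation (refl a)"
  by (simp add: orthogonal_transformation_def refl_linear refl_inner_refl)

lemma orthogonal_transformation_comp_refl:
  assumes "orthogonal_transformation u"
  shows "u \<circ> refl a = refl (u a) \<circ> u"
  using assms unfolding orthogonal_transformation_def refl_def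
  by (simp add: fun_eq_iff linear_diff linear_scale)

lemma refl_word_Nil [simp]: "refl_word [] = id"
  by (simp add: refl_word_def)

lemma refl_word_Cons [simp]: "refl_word (a # xs) = refl a \<circ> refl_word xs"
  by (simp add: refl_word_def)

lemma refl_word_append: "refl_word (xs @ ys) = refl_word xs \<circ> refl_word ys"
  by (induction xs) auto

lemma orthogonal_transformation_refl_word: "orthogonal_transformation (refl_word xs)"
proof (induction xs)
  case (Cons a xs)
  then show ?case
    by (simp only: refl_word_Cons orthogonal_transformation_compose orthogonal_transformation_refl)
qed (simp add: id_def)

lemma refl_word_comp_rev: "refl_word xs \<circ> refl_word (rev xs) = id"
  by (induction xs) (simp_all add: refl_word_append comp_assoc, simp add: fun_eq_iff)

lemma inv_refl_word: "inv (refl_word xs) = refl_word (rev xs)"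
  by (rule inv_unique_comp[OF refl_word_comp_rev]) (metis refl_word_comp_rev rev_rev_ident)

lemma refl_word_mem_weyl_group: "set xs \<subseteq> \<Phi> \<Longrightarrow> refl_word xs \<in> weyl_group \<Phi>"
  by (auto simp: weyl_group_def)

lemma weyl_group_orthogonal:
  "w \<in> weyl_group \<Phi> \<Longrightarrow> orthogonal_transformation w"
  by (auto simp: weyl_group_def orthogonal_transformation_refl_word)

lemma weyl_group_uminus: "w \<in> weyl_group \<Phi> \<Longrightarrow> w (- x) = - w x"
  by (rule linear_neg[OF orthogonal_transformation_linear[OF weyl_group_orthogonal]])

lemma weyl_group_inv_apply: "w \<in> weyl_group \<Phi> \<Longrightarrow> inv w (w x) = x"
  by (rule inv_f_f[OF orthogonal_transformation_inj[OF weyl_group_orthogonal]])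

lemma weyl_group_apply_inv: "w \<in> weyl_group \<Phi> \<Longrightarrow> w (inv w x) = x"
  by (rule surj_f_inv_f[OF orthogonal_transformation_surj[OF weyl_group_orthogonal]])

lemma inv_mem_weyl_group:
  assumes "w \<in> weyl_group \<Phi>"
  shows "inv w \<in> weyl_group \<Phi>"
proof -
  obtain xs where "set xs \<subseteq> \<Phi>" "w = refl_word xs"
    using assms by (auto simp: weyl_group_def)
  then show ?thesis
    by (simp add: inv_refl_word refl_word_mem_weyl_group)
qed

lemma refl_comp_mem_weyl_group:
  assumes "a \<in> \<Phi>" and "w \<in> weyl_group \<Phi>"
  shows "refl a \<circ> w \<in> weyl_group \<Phi>"
proof -
  obtain xs where "set xs \<subseteq> \<Phi>" "w = refl_word xs"
    using assms(2) by (auto simp: weyl_group_def)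
  then show ?thesis
    using assms(1) refl_word_mem_weyl_group[of "a # xs"] by simp
qed

text \<open>Unlike \<open>sum_involution_eq_0\<close>, fixed points are allowed: there \<open>g x + g x = 0\<close>
  already forces \<open>g x = 0\<close>.\<close>

lemma sum_involution_eq_0':
  fixes g :: "'b \<Rightarrow> 'c::linordered_ab_group_add"
  assumes "finite A" "\<And>x. x \<in> A \<Longrightarrow> t x \<in> A" "\<And>x. x \<in> A \<Longrightarrow> t (t x) = x"
    and "\<And>x. x \<in> A \<Longrightarrow> g x + g (t x) = 0"
  shows "sum g A = 0"
proof -
  have "bij_betw t A A"
    by (rule bij_betw_byWitness[where f' = t]) (use assms in auto)
  then have "sum g A = sum (g \<circ> t) A"
    by (simp add: sum.reindex_bij_betw)
  then have "sum g A + sum g A = (\<Sum>x\<in>A. g x + g (t x))"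
    by (simp add: sum.distrib)
  also have "\<dots> = 0"
    by (simp add: assms(4))
  finally show ?thesis
    by simp
qed

section \<open>Positive roots and simple reflections\<close>

definition nonneg_comb :: "'a::real_vector set \<Rightarrow> 'a \<Rightarrow> bool" where
  "nonneg_comb D x \<longleftrightarrow> (\<exists>r. x = (\<Sum>d\<in>D. r d *\<^sub>R d) \<and> (\<forall>d\<in>D. 0 \<le> r d))"

lemma nonneg_comb_add: "nonneg_comb D x \<Longrightarrow> nonneg_comb D y \<Longrightarrow> nonneg_comb D (x + y)"
  unfolding nonneg_comb_def
  by (elim exE conjE, rule exI[of _ "\<lambda>d. _ d + _ d"]) (auto simp: scaleR_add_left sum.distrib)

lemma nonneg_comb_scaleR: "nonneg_comb D x \<Longrightarrow> 0 \<le> t \<Longrightarrow> nonneg_comb D (t *\<^sub>R x)"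
  unfolding nonneg_comb_def
  by (elim exE conjE, rule exI[of _ "\<lambda>d. t * _ d"]) (auto simp: scaleR_sum_right)

lemma sum_if_eq_scaleR:
  fixes D :: "'a::real_vector set"
  assumes "finite D" "a \<in> D"
  shows "(\<Sum>d\<in>D. (if d = a then k else 0) *\<^sub>R d) = k *\<^sub>R a"
  using assms by (simp add: if_distrib[of "\<lambda>c. c *\<^sub>R _"] cong: if_cong)

locale based_root_system =
  fixes \<Phi> \<Delta> :: "'a::euclidean_space set"
  assumes root_system: "root_system \<Phi>" and root_basis: "root_basis \<Phi> \<Delta>"
begin

abbreviation "P \<equiv> pos_roots \<Phi> \<Delta>"
abbreviation "N \<equiv> neg_roots \<Phi> \<Delta>"

lemma finite_roots: "finite \<Phi>"
  and zero_not_root: "0 \<notin> \<Phi>"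
  and refl_root: "a \<in> \<Phi> \<Longrightarrow> b \<in> \<Phi> \<Longrightarrow> refl a b \<in> \<Phi>"
  and cartan_integer: "a \<in> \<Phi> \<Longrightarrow> b \<in> \<Phi> \<Longrightarrow> 2 * (b \<bullet> a) / (a \<bullet> a) \<in> \<int>"
  and root_multiple: "a \<in> \<Phi> \<Longrightarrow> c *\<^sub>R a \<in> \<Phi> \<Longrightarrow> c = 1 \<or> c = -1"
  using root_system by (auto simp: root_system_def)

lemma simple_roots_subset: "\<Delta> \<subseteq> \<Phi>"
  and independent_simple_roots: "independent \<Delta>"
  using root_basis by (auto simp: root_basis_def)

lemma finite_simple_roots: "finite \<Delta>"
  using simple_roots_subset finite_roots finite_subset by blast

lemma uminus_root: "a \<in> \<Phi> \<Longrightarrow> - a \<in> \<Phi>"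
  using refl_root[of a a] by (simp add: refl_self)

lemma simple_coeffs_unique:
  assumes "(\<Sum>d\<in>\<Delta>. r d *\<^sub>R d) = (\<Sum>d\<in>\<Delta>. s d *\<^sub>R d)" "x \<in> \<Delta>"
  shows "r x = s x"
proof -
  have "(\<Sum>d\<in>\<Delta>. (r d - s d) *\<^sub>R d) = 0"
    using assms(1) by (simp add: scaleR_diff_left sum_subtractf)
  then show ?thesis
    using independent_simple_roots assms(2) finite_simple_roots
    unfolding independent_explicit by fastforce
qed

lemma pos_roots_subset: "P \<subseteq> \<Phi>"
  by (auto simp: pos_roots_def)

lemma finite_pos_roots: "finite P"
  using pos_roots_subset finite_roots finite_subset by blast

lemma neg_roots_iff: "x \<in> N \<longleftrightarrow> - x \<in> P"
  unfolding neg_roots_def by (metis image_iff minus_minus)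

lemma pos_roots_nonneg_comb: "x \<in> P \<Longrightarrow> nonneg_comb \<Delta> x"
  unfolding pos_roots_def nonneg_comb_def
  by (elim CollectE exE conjE, rule exI[of _ "\<lambda>d. of_int (_ d)"]) auto

lemma root_pos_or_neg: "x \<in> \<Phi> \<Longrightarrow> x \<in> P \<or> x \<in> N"
proof -
  assume x: "x \<in> \<Phi>"
  then obtain c :: "'a \<Rightarrow> int" where c: "x = (\<Sum>d\<in>\<Delta>. of_int (c d) *\<^sub>R d)"
    and sign: "(\<forall>d\<in>\<Delta>. c d \<ge> 0) \<or> (\<forall>d\<in>\<Delta>. - c d \<ge> 0)"
    using root_basis unfolding root_basis_def by fastforce
  have minus: "- x = (\<Sum>d\<in>\<Delta>. of_int (- c d) *\<^sub>R d)"
    using c by (simp add: sum_negf)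
  from sign show ?thesis
  proof
    assume "\<forall>d\<in>\<Delta>. c d \<ge> 0"
    then show ?thesis
      using x c by (auto simp: pos_roots_def)
  next
    assume "\<forall>d\<in>\<Delta>. - c d \<ge> 0"
    then have "- x \<in> P"
      using uminus_root[OF x] minus unfolding pos_roots_def by (intro CollectI conjI exI)
    then show ?thesis
      by (simp add: neg_roots_iff)
  qed
qed

lemma pos_root_coeff_nonneg:
  assumes "x \<in> P" "x = (\<Sum>d\<in>\<Delta>. r d *\<^sub>R d)" "d \<in> \<Delta>"
  shows "0 \<le> r d"
proof -
  obtain c :: "'a \<Rightarrow> int" where "x = (\<Sum>d\<in>\<Delta>. of_int (c d) *\<^sub>R d)" "\<forall>d\<in>\<Delta>. c d \<ge> 0"
    using assms(1) by (auto simp: pos_roots_def)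
  then show ?thesis
    using simple_coeffs_unique[of r "\<lambda>d. of_int (c d)"] assms(2,3) by simp
qed

lemma root_pos_if_coeff_pos:
  assumes "x \<in> \<Phi>" "x = (\<Sum>d\<in>\<Delta>. r d *\<^sub>R d)" "d \<in> \<Delta>" "r d > 0"
  shows "x \<in> P"
proof (rule ccontr)
  assume "x \<notin> P"
  then have "- x \<in> P"
    using root_pos_or_neg[OF assms(1)] neg_roots_iff by blast
  moreover have "- x = (\<Sum>d\<in>\<Delta>. (- r d) *\<^sub>R d)"
    using assms(2) by (simp add: sum_negf)
  ultimately show False
    using pos_root_coeff_nonneg[of "- x" "\<lambda>d. - r d"] assms(3,4) by fastforce
qed

lemma root_pos_if_nonneg_comb:
  assumes "x \<in> \<Phi>" "nonneg_comb \<Delta> x"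
  shows "x \<in> P"
proof -
  obtain r where r: "x = (\<Sum>d\<in>\<Delta>. r d *\<^sub>R d)" "\<forall>d\<in>\<Delta>. 0 \<le> r d"
    using assms(2) by (auto simp: nonneg_comb_def)
  have "\<exists>d\<in>\<Delta>. r d \<noteq> 0"
  proof (rule ccontr)
    assume "\<not> ?thesis"
    then have "x = 0"
      using r(1) by simp
    then show False
      using assms(1) zero_not_root by blast
  qed
  then obtain d where "d \<in> \<Delta>" "r d > 0"
    using r(2) by force
  then show ?thesis
    using root_pos_if_coeff_pos[OF assms(1) r(1)] by blast
qed

lemma pos_roots_disjoint_neg: "x \<in> P \<Longrightarrow> x \<notin> N"
proof
  assume x: "x \<in> P" "x \<in> N"
  obtain r where r: "x = (\<Sum>d\<in>\<Delta>. r d *\<^sub>R d)"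
    using pos_roots_nonneg_comb[OF x(1)] by (auto simp: nonneg_comb_def)
  have "- x = (\<Sum>d\<in>\<Delta>. (- r d) *\<^sub>R d)"
    using r by (simp add: sum_negf)
  then have "\<forall>d\<in>\<Delta>. r d = 0"
    using x pos_root_coeff_nonneg[OF x(1) r] pos_root_coeff_nonneg[of "- x" "\<lambda>d. - r d"]
    by (force simp: neg_roots_iff)
  then show False
    using r x(1) pos_roots_subset zero_not_root by auto
qed

lemma pos_root_uminus_not_pos: "x \<in> P \<Longrightarrow> - x \<notin> P"
  using pos_roots_disjoint_neg neg_roots_iff by blast

lemma simple_root_pos: "a \<in> \<Delta> \<Longrightarrow> a \<in> P"
  using simple_roots_subset sum_if_eq_scaleR[OF finite_simple_roots, of a 1]
  unfolding pos_roots_def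
  by (intro CollectI conjI exI[of _ "\<lambda>d. if d = a then 1 else 0"])
     (auto simp: if_distrib cong: if_cong)

lemma refl_simple_coeffs:
  assumes "x = (\<Sum>d\<in>\<Delta>. r d *\<^sub>R d)" "a \<in> \<Delta>"
  shows "refl a x = (\<Sum>d\<in>\<Delta>. (r d - (if d = a then 2 * (x \<bullet> a) / (a \<bullet> a) else 0)) *\<^sub>R d)"
  using sum_if_eq_scaleR[OF finite_simple_roots assms(2)] assms(1)
  by (simp add: refl_def scaleR_diff_left sum_subtractf)

lemma pos_root_coeff_pos_off_simple:
  assumes "x \<in> P" "x = (\<Sum>d\<in>\<Delta>. r d *\<^sub>R d)" "a \<in> \<Delta>" "x \<noteq> a"
  shows "\<exists>d\<in>\<Delta>. d \<noteq> a \<and> r d > 0"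
proof (rule ccontr)
  assume "\<not> ?thesis"
  then have "\<forall>d\<in>\<Delta>. d \<noteq> a \<longrightarrow> r d = 0"
    using pos_root_coeff_nonneg[OF assms(1,2)] by force
  then have "x = (\<Sum>d\<in>\<Delta>. (if d = a then r a else 0) *\<^sub>R d)"
    unfolding assms(2) by (intro sum.cong) auto
  then have xa: "x = r a *\<^sub>R a"
    using sum_if_eq_scaleR[OF finite_simple_roots assms(3)] by simp
  then have "r a = 1 \<or> r a = -1"
    using root_multiple assms(1,3) simple_roots_subset pos_roots_subset by blast
  moreover have "- a \<notin> P"
    using pos_roots_disjoint_neg simple_root_pos[OF assms(3)] neg_roots_iff by auto
  ultimately show False
    using xa assms(1,4) by auto
qed

lemma refl_simple_pos_root:
  assumes "a \<in> \<Delta>" "x \<in> P" "x \<noteq> a"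
  shows "refl a x \<in> P"
proof -
  obtain r where r: "x = (\<Sum>d\<in>\<Delta>. r d *\<^sub>R d)"
    using pos_roots_nonneg_comb[OF assms(2)] by (auto simp: nonneg_comb_def)
  obtain d where "d \<in> \<Delta>" "d \<noteq> a" "r d > 0"
    using pos_root_coeff_pos_off_simple[OF assms(2) r assms(1,3)] by blast
  moreover have "refl a x \<in> \<Phi>"
    using refl_root assms simple_roots_subset pos_roots_subset by blast
  ultimately show ?thesis
    using root_pos_if_coeff_pos[OF _ refl_simple_coeffs[OF r assms(1)]] by simp
qed

lemma weyl_group_root: "w \<in> weyl_group \<Phi> \<Longrightarrow> x \<in> \<Phi> \<Longrightarrow> w x \<in> \<Phi>"
proof -
  have "set xs \<subseteq> \<Phi> \<Longrightarrow> refl_word xs x \<in> \<Phi>" if "x \<in> \<Phi>" for xs x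
    using that by (induction xs) (auto intro: refl_root)
  then show "w \<in> weyl_group \<Phi> \<Longrightarrow> x \<in> \<Phi> \<Longrightarrow> w x \<in> \<Phi>"
    by (auto simp: weyl_group_def)
qed

definition abs_root :: "'a \<Rightarrow> 'a" where
  "abs_root x = (if x \<in> P then x else - x)"

lemma abs_root_pos: "x \<in> \<Phi> \<Longrightarrow> abs_root x \<in> P"
  using root_pos_or_neg[of x] neg_roots_iff[of x] by (auto simp: abs_root_def)

lemma abs_root_uminus: "x \<in> \<Phi> \<Longrightarrow> abs_root (- x) = abs_root x"
  using root_pos_or_neg[of x] pos_roots_disjoint_neg[of x] neg_roots_iff[of x]
  by (auto simp: abs_root_def)

lemma abs_root_pos_root: "x \<in> P \<Longrightarrow> abs_root x = x"
  by (simp add: abs_root_def)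

lemma abs_root_inv_abs_root:
  assumes "w \<in> weyl_group \<Phi>" "p \<in> P"
  shows "abs_root (inv w (abs_root (w p))) = p"
proof -
  have "p \<in> \<Phi>"
    using assms(2) pos_roots_subset by blast
  moreover have "abs_root (w p) = w p \<or> abs_root (w p) = w (- p)"
    using weyl_group_uminus[OF assms(1)] by (simp add: abs_root_def)
  ultimately show ?thesis
    using abs_root_uminus abs_root_pos_root[OF assms(2)] weyl_group_inv_apply[OF assms(1)]
    by (metis (no_types, lifting))
qed

lemma abs_root_weyl_bij:
  assumes "w \<in> weyl_group \<Phi>"
  shows "bij_betw (\<lambda>p. abs_root (w p)) P P"
proof (rule bij_betw_byWitness[where f' = "\<lambda>x. abs_root (inv w x)"])
  have "inv (inv w) = w"
    using assms weyl_group_orthogonal orthogonal_transformation_bij inv_inv_eq by blast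
  then show "\<forall>x\<in>P. abs_root (w (abs_root (inv w x))) = x"
    using abs_root_inv_abs_root[OF inv_mem_weyl_group[OF assms]] by simp
  show "\<forall>p\<in>P. abs_root (inv w (abs_root (w p))) = p"
    using abs_root_inv_abs_root[OF assms] by blast
  show "(\<lambda>p. abs_root (w p)) ` P \<subseteq> P" "(\<lambda>x. abs_root (inv w x)) ` P \<subseteq> P"
    using abs_root_pos weyl_group_root[OF assms] weyl_group_root[OF inv_mem_weyl_group[OF assms]]
      pos_roots_subset by auto
qed

lemma exists_height: "\<exists>h :: 'a \<Rightarrow> real. linear h \<and> (\<forall>x\<in>P. 1 \<le> h x)"
proof -
  obtain h :: "'a \<Rightarrow> real" where h: "linear h" "\<forall>d\<in>\<Delta>. h d = 1"
    using linear_independent_extend[OF independent_simple_roots, of "\<lambda>_. 1"] by blast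
  have "1 \<le> h x" if x: "x \<in> P" for x
  proof -
    obtain c :: "'a \<Rightarrow> int" where c: "x = (\<Sum>d\<in>\<Delta>. of_int (c d) *\<^sub>R d)" "\<forall>d\<in>\<Delta>. 0 \<le> c d"
      using x by (auto simp: pos_roots_def)
    have "\<exists>d\<in>\<Delta>. c d \<noteq> 0"
    proof (rule ccontr)
      assume "\<not> ?thesis"
      then have "x = 0"
        using c(1) by simp
      then show False
        using x pos_roots_subset zero_not_root by blast
    qed
    then obtain d0 where d0: "d0 \<in> \<Delta>" "1 \<le> c d0"
      using c(2) by force
    have "h x = (\<Sum>d\<in>\<Delta>. of_int (c d))"
      using h by (simp add: c(1) linear_sum[OF h(1)] linear_scale[OF h(1)])
    also have "\<dots> \<ge> of_int (c d0)"
      using c(2) d0(1) finite_simple_roots by (intro member_le_sum) auto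
    finally show ?thesis
      using d0(2) by linarith
  qed
  with h(1) show ?thesis
    by blast
qed

lemma pos_root_descent:
  assumes "b \<in> P" "b \<notin> \<Delta>"
  obtains a k where "a \<in> \<Delta>" "1 \<le> k" "refl a b = b - k *\<^sub>R a" "refl a b \<in> P"
proof -
  obtain r where r: "b = (\<Sum>d\<in>\<Delta>. r d *\<^sub>R d)" "\<forall>d\<in>\<Delta>. 0 \<le> r d"
    using pos_roots_nonneg_comb[OF assms(1)] by (auto simp: nonneg_comb_def)
  have b: "b \<in> \<Phi>"
    using assms(1) pos_roots_subset by blast
  have "0 < b \<bullet> b"
    using b zero_not_root by auto
  also have "b \<bullet> b = (\<Sum>d\<in>\<Delta>. r d * (b \<bullet> d))"
    by (subst (2) r(1)) (simp add: inner_sum_right)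
  finally obtain a where a: "a \<in> \<Delta>" "0 < r a * (b \<bullet> a)"
    using sum_nonpos[of \<Delta> "\<lambda>d. r d * (b \<bullet> d)"] by (metis not_less)
  then have "0 < b \<bullet> a"
    using r(2) by (auto simp: zero_less_mult_iff)
  moreover have a_root: "a \<in> \<Phi>"
    using a(1) simple_roots_subset by blast
  moreover obtain k :: int where k: "2 * (b \<bullet> a) / (a \<bullet> a) = of_int k"
    using cartan_integer[OF a_root b] by (auto elim: Ints_cases)
  moreover have "0 < a \<bullet> a"
    using a_root zero_not_root by auto
  ultimately have "(0::real) < of_int k"
    by (simp flip: k)
  moreover have "refl a b \<in> P"
    using refl_simple_pos_root[OF a(1) assms(1)] assms(2) a(1) by blast
  ultimately show ?thesis
    using that[OF a(1), of "of_int k"] k by (simp add: refl_def)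
qed

lemma pos_root_simple_conj:
  assumes "b \<in> P"
  shows "\<exists>xs a. set xs \<subseteq> \<Delta> \<and> a \<in> \<Delta> \<and> b = refl_word xs a"
proof -
  obtain h :: "'a \<Rightarrow> real" where h: "linear h" "\<forall>x\<in>P. 1 \<le> h x"
    using exists_height by blast
  have "\<forall>b\<in>P. h b \<le> of_nat n \<longrightarrow> (\<exists>xs a. set xs \<subseteq> \<Delta> \<and> a \<in> \<Delta> \<and> b = refl_word xs a)" for n
  proof (induction n)
    case 0
    then show ?case
      using h(2) by force
  next
    case (Suc n)
    show ?case
    proof (intro ballI impI)
      fix b assume b: "b \<in> P" "h b \<le> of_nat (Suc n)"
      show "\<exists>xs a. set xs \<subseteq> \<Delta> \<and> a \<in> \<Delta> \<and> b = refl_word xs a"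
      proof (cases "b \<in> \<Delta>")
        case True
        then show ?thesis
          by (intro exI[of _ "[]"] exI[of _ b]) simp
      next
        case False
        then obtain a k where a: "a \<in> \<Delta>" "1 \<le> k" "refl a b = b - k *\<^sub>R a" "refl a b \<in> P"
          using pos_root_descent[OF b(1)] by blast
        have "1 \<le> k * h a"
          using a(1,2) h(2) simple_root_pos mult_mono[of 1 k 1 "h a"] by simp
        then have "h (refl a b) \<le> of_nat n"
          using b(2) a(3) by (simp add: linear_diff[OF h(1)] linear_scale[OF h(1)])
        then obtain xs a' where xs: "set xs \<subseteq> \<Delta>" "a' \<in> \<Delta>" "refl a b = refl_word xs a'"
          using Suc.IH a(4) by blast
        have "b = refl a (refl a b)"
          by simp
        also have "\<dots> = refl_word (a # xs) a'"
          using xs(3) by simp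
        finally show ?thesis
          using xs(1,2) a(1) by (intro exI[of _ "a # xs"] exI[of _ a']) simp
      qed
    qed
  qed
  then show ?thesis
    using assms real_nat_ceiling_ge[of "h b"] by blast
qed

lemma refl_eq_simple_word:
  assumes "b \<in> \<Phi>"
  shows "\<exists>ys. set ys \<subseteq> \<Delta> \<and> refl b = refl_word ys"
proof -
  obtain xs a where xs: "set xs \<subseteq> \<Delta>" "a \<in> \<Delta>" "abs_root b = refl_word xs a"
    using pos_root_simple_conj[OF abs_root_pos[OF assms]] by blast
  have "refl b = refl (abs_root b)"
    by (simp add: abs_root_def)
  also have "\<dots> = refl (refl_word xs a)"
    using xs(3) by simp
  also have "\<dots> = refl (refl_word xs a) \<circ> (refl_word xs \<circ> refl_word (rev xs))"
    by (simp add: refl_word_comp_rev)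
  also have "\<dots> = refl_word xs \<circ> refl a \<circ> refl_word (rev xs)"
    by (simp add: comp_assoc
        orthogonal_transformation_comp_refl[OF orthogonal_transformation_refl_word])
  also have "\<dots> = refl_word (xs @ a # rev xs)"
    by (simp add: refl_word_append comp_assoc)
  finally show ?thesis
    using xs(1,2) by (intro exI[of _ "xs @ a # rev xs"]) auto
qed

lemma weyl_group_simple_word:
  assumes "w \<in> weyl_group \<Phi>"
  shows "\<exists>ys. set ys \<subseteq> \<Delta> \<and> w = refl_word ys"
proof -
  have "\<exists>ys. set ys \<subseteq> \<Delta> \<and> refl_word xs = refl_word ys" if "set xs \<subseteq> \<Phi>" for xs
    using that
  proof (induction xs)
    case (Cons b xs)
    obtain ys where "set ys \<subseteq> \<Delta>" "refl_word xs = refl_word ys"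
      using Cons by auto
    moreover obtain zs where "set zs \<subseteq> \<Delta>" "refl b = refl_word zs"
      using refl_eq_simple_word[of b] Cons.prems by auto
    ultimately have "set (zs @ ys) \<subseteq> \<Delta> \<and> refl_word (b # xs) = refl_word (zs @ ys)"
      by (simp add: refl_word_append)
    then show ?case
      by blast
  qed (intro exI[of _ "[]"], simp)
  then show ?thesis
    using assms by (auto simp: weyl_group_def)
qed

section \<open>Coxeter length as the number of inversions\<close>

definition negated :: "('a \<Rightarrow> 'a) \<Rightarrow> 'a set" where
  "negated u = {x \<in> P. u x \<in> N}"

lemma finite_negated: "finite (negated u)"
  using finite_pos_roots by (simp add: negated_def)

lemma negated_comp_simple_refl:
  assumes "linear u" "a \<in> \<Delta>" "u a \<in> P"
  shows "negated (u \<circ> refl a) = insert a (refl a ` negated u)"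
proof (intro equalityI subsetI)
  fix x assume x: "x \<in> negated (u \<circ> refl a)"
  show "x \<in> insert a (refl a ` negated u)"
  proof (cases "x = a")
    case False
    then have "refl a x \<in> negated u"
      using x refl_simple_pos_root[OF assms(2)] by (simp add: negated_def)
    then show ?thesis
      by (metis image_eqI insertI2 refl_refl)
  qed simp
next
  fix x assume x: "x \<in> insert a (refl a ` negated u)"
  have "u (refl a a) \<in> N"
    using assms(3) by (simp add: refl_self linear_neg[OF assms(1)] neg_roots_iff)
  moreover have "refl a y \<in> P" if "y \<in> negated u" for y
    using that assms(3) refl_simple_pos_root[OF assms(2)] pos_roots_disjoint_neg
    by (auto simp: negated_def)
  ultimately show "x \<in> negated (u \<circ> refl a)"
    using x simple_root_pos[OF assms(2)] by (auto simp: negated_def)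
qed

lemma card_negated_comp_simple_refl:
  assumes "linear u" "a \<in> \<Delta>" "u a \<in> P"
  shows "card (negated (u \<circ> refl a)) = card (negated u) + 1"
proof -
  have "a \<notin> refl a ` negated u"
  proof
    assume "a \<in> refl a ` negated u"
    then have "- a \<in> P"
      by (auto simp: negated_def refl_self dest: arg_cong[of _ _ "refl a"])
    then show False
      using simple_root_pos[OF assms(2)] pos_roots_disjoint_neg neg_roots_iff by auto
  qed
  moreover have "inj (refl a)"
    by (metis injI refl_refl)
  ultimately show ?thesis
    using finite_negated
    by (simp add: negated_comp_simple_refl[OF assms] card_image inj_on_subset[of "refl a"])
qed

lemma shorter_word_if_simple_negated:
  assumes "set xs \<subseteq> \<Delta>" "a \<in> \<Delta>" "refl_word xs a \<in> N"
  shows "\<exists>ys. set ys \<subseteq> \<Delta> \<and> length ys < length xs \<and> refl_word xs \<circ> refl a = refl_word ys"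
  using assms(1,3)
proof (induction xs)
  case Nil
  then show ?case
    using simple_root_pos[OF assms(2)] pos_roots_disjoint_neg by auto
next
  case (Cons b xs)
  have "refl_word xs a \<in> \<Phi>"
    using weyl_group_root[OF refl_word_mem_weyl_group] Cons.prems(1) assms(2) simple_roots_subset
    by auto
  then consider "refl_word xs a \<in> N" | "refl_word xs a \<in> P"
    using root_pos_or_neg by blast
  then show ?case
  proof cases
    case 1
    moreover have "set xs \<subseteq> \<Delta>"
      using Cons.prems(1) by simp
    ultimately obtain ys where ys: "set ys \<subseteq> \<Delta>" "length ys < length xs"
      "refl_word xs \<circ> refl a = refl_word ys"
      using Cons.IH by blast
    then have "refl_word (b # xs) \<circ> refl a = refl_word (b # ys)"
      by (simp only: refl_word_Cons comp_assoc ys(3))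
    moreover have "set (b # ys) \<subseteq> \<Delta>" "length (b # ys) < length (b # xs)"
      using Cons.prems(1) ys(1,2) by auto
    ultimately show ?thesis
      by blast
  next
    case 2
    \<comment> \<open>a simple reflection only negates its own root\<close>
    have "refl_word xs a = b"
      using Cons.prems refl_simple_pos_root[OF _ 2] pos_roots_disjoint_neg by force
    then have conj: "refl b \<circ> refl_word xs = refl_word xs \<circ> refl a"
      using orthogonal_transformation_comp_refl[OF orthogonal_transformation_refl_word, of xs a]
      by simp
    have "refl_word (b # xs) \<circ> refl a = refl_word xs \<circ> refl a \<circ> refl a"
      by (simp only: refl_word_Cons conj)
    also have "\<dots> = refl_word xs"
      by (simp add: fun_eq_iff)
    finally have "refl_word (b # xs) \<circ> refl a = refl_word xs" .
    moreover have "set xs \<subseteq> \<Delta>"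
      using Cons.prems(1) by simp
    ultimately show ?thesis
      by (metis length_Cons lessI)
  qed
qed

lemma refl_word_snoc: "refl_word (xs @ [a]) = refl_word xs \<circ> refl a"
  by (simp add: refl_word_append)

definition reduced_word :: "'a list \<Rightarrow> bool" where
  "reduced_word xs \<longleftrightarrow> set xs \<subseteq> \<Delta> \<and>
     (\<forall>ys. set ys \<subseteq> \<Delta> \<and> refl_word ys = refl_word xs \<longrightarrow> length xs \<le> length ys)"

lemma reduced_word_snocD: "reduced_word (xs @ [a]) \<Longrightarrow> reduced_word xs"
  unfolding reduced_word_def
  by (metis (no_types, lifting) Un_subset_iff add_le_cancel_right length_append refl_word_append
      set_append)

lemma card_negated_reduced_word:
  "reduced_word xs \<Longrightarrow> card (negated (refl_word xs)) = length xs"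
proof (induction xs rule: rev_induct)
  case Nil
  have "negated (\<lambda>x. x) = {}"
    using pos_roots_disjoint_neg by (auto simp: negated_def)
  then show ?case
    by simp
next
  case (snoc a xs)
  have a: "a \<in> \<Delta>" and xs: "set xs \<subseteq> \<Delta>"
    using snoc.prems by (auto simp: reduced_word_def)
  have "refl_word xs a \<notin> N"
  proof
    assume "refl_word xs a \<in> N"
    then obtain ys where "set ys \<subseteq> \<Delta>" "length ys < length xs"
      "refl_word ys = refl_word (xs @ [a])"
      using shorter_word_if_simple_negated[OF xs a] by (auto simp: refl_word_append)
    then show False
      using snoc.prems by (fastforce simp: reduced_word_def)
  qed
  moreover have "refl_word xs a \<in> \<Phi>"
    using weyl_group_root[OF refl_word_mem_weyl_group] xs a simple_roots_subset by auto
  ultimately have "refl_word xs a \<in> P"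
    using root_pos_or_neg by blast
  then have "card (negated (refl_word xs \<circ> refl a)) = card (negated (refl_word xs)) + 1"
    by (rule card_negated_comp_simple_refl[OF orthogonal_transformation_linear[OF
          orthogonal_transformation_refl_word] a])
  then show ?case
    using snoc.IH[OF reduced_word_snocD[OF snoc.prems]] by (simp only: refl_word_snoc) simp
qed

lemma wlength_eq_card_negated:
  assumes "w \<in> weyl_group \<Phi>"
  shows "wlength \<Delta> w = card (negated w)"
proof -
  let ?word = "\<lambda>n. \<exists>xs. length xs = n \<and> set xs \<subseteq> \<Delta> \<and> w = refl_word xs"
  obtain ys where "set ys \<subseteq> \<Delta>" "w = refl_word ys"
    using weyl_group_simple_word[OF assms] by blast
  then have "?word (length ys)"
    by blast
  then have "?word (LEAST n. ?word n)"
    by (rule LeastI)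
  then obtain xs where xs: "length xs = wlength \<Delta> w" "set xs \<subseteq> \<Delta>" "w = refl_word xs"
    unfolding wlength_def by blast
  have "wlength \<Delta> w \<le> length ys" if "set ys \<subseteq> \<Delta>" "refl_word ys = refl_word xs" for ys
    unfolding wlength_def by (rule Least_le) (use that xs(3) in auto)
  then have "reduced_word xs"
    using xs(1,2) by (auto simp: reduced_word_def)
  then show ?thesis
    using card_negated_reduced_word xs by simp
qed

lemma card_negated_inv:
  assumes "w \<in> weyl_group \<Phi>"
  shows "card (negated (inv w)) = card (negated w)"
proof -
  have "bij_betw (\<lambda>x. - w x) (negated w) (negated (inv w))"
  proof (rule bij_betw_byWitness[where f' = "\<lambda>y. - inv w y"])
    have "inv w (w x) = x" "w (inv w x) = x" "inv w (- x) = - inv w x" for x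
      using weyl_group_inv_apply[OF assms] weyl_group_apply_inv[OF assms]
        weyl_group_uminus[OF inv_mem_weyl_group[OF assms]] by simp_all
    then show "\<forall>x\<in>negated w. - inv w (- w x) = x" "\<forall>y\<in>negated (inv w). - w (- inv w y) = y"
      "(\<lambda>x. - w x) ` negated w \<subseteq> negated (inv w)" "(\<lambda>y. - inv w y) ` negated (inv w) \<subseteq> negated w"
      using weyl_group_uminus[OF assms] by (auto simp: negated_def neg_roots_iff)
  qed
  then show ?thesis
    by (metis bij_betw_same_card)
qed

lemma wlength_eq_card_inversions:
  "w \<in> weyl_group \<Phi> \<Longrightarrow> wlength \<Delta> w = card (inversions \<Phi> \<Delta> w)"
  using wlength_eq_card_negated card_negated_inv
  by (simp add: inversions_def negated_def[abs_def])

section \<open>Maximal inversions\<close>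

lemma inner_square_less_of_roots:
  assumes "a \<in> \<Phi>" "b \<in> \<Phi>" "a \<noteq> b" "a \<noteq> - b"
  shows "(a \<bullet> b)\<^sup>2 < (a \<bullet> a) * (b \<bullet> b)"
proof -
  have "\<bar>a \<bullet> b\<bar> \<noteq> norm a * norm b"
  proof
    assume "\<bar>a \<bullet> b\<bar> = norm a * norm b"
    moreover have "a \<noteq> 0" "b \<noteq> 0"
      using assms(1,2) zero_not_root by auto
    ultimately obtain c where "b = c *\<^sub>R a"
      by (auto simp: norm_cauchy_schwarz_equal collinear_lemma)
    then show False
      using root_multiple[OF assms(1)] assms by force
  qed
  then have "\<bar>a \<bullet> b\<bar> < norm a * norm b"
    using Cauchy_Schwarz_ineq2 by (simp add: order_less_le)
  then have "\<bar>a \<bullet> b\<bar>\<^sup>2 < (norm a * norm b)\<^sup>2"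
    by (rule power_strict_mono) auto
  then show ?thesis
    by (simp add: power_mult_distrib power2_norm_eq_inner)
qed

text \<open>Both Cartan integers of \<open>a, b\<close> are positive with product below 4, so one of them is 1.\<close>

lemma diff_root_if_inner_pos:
  assumes a: "a \<in> \<Phi>" and b: "b \<in> \<Phi>" and "a \<noteq> b" and ab: "0 < a \<bullet> b"
  shows "a - b \<in> \<Phi>"
proof -
  obtain k :: int where k: "2 * (a \<bullet> b) / (b \<bullet> b) = of_int k"
    using cartan_integer[OF b a] by (auto elim: Ints_cases)
  obtain m :: int where m: "2 * (b \<bullet> a) / (a \<bullet> a) = of_int m"
    using cartan_integer[OF a b] by (auto elim: Ints_cases)
  have aa: "0 < a \<bullet> a" and bb: "0 < b \<bullet> b"
    using a b zero_not_root by auto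
  have "(0::real) < of_int k" "(0::real) < of_int m"
    unfolding k[symmetric] m[symmetric] using aa bb ab by (simp_all add: inner_commute)
  then have "0 < k" "0 < m"
    by simp_all
  have "of_int (k * m) * ((a \<bullet> a) * (b \<bullet> b)) = 4 * (a \<bullet> b)\<^sup>2"
    using aa bb by (simp flip: k m add: inner_commute power2_eq_square)
  also have "\<dots> < 4 * ((a \<bullet> a) * (b \<bullet> b))"
  proof -
    have "a \<noteq> - b"
    proof
      assume "a = - b"
      then have "a \<bullet> b = - (b \<bullet> b)"
        by simp
      then show False
        using ab bb by linarith
    qed
    then show ?thesis
      using inner_square_less_of_roots[OF a b \<open>a \<noteq> b\<close>] by simp
  qed
  finally have "of_int k * of_int m < (4::real)"
    using aa bb by simp
  then have "k * m < 4"
    by (metis of_int_less_iff of_int_mult of_int_numeral)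
  have "k = 1 \<or> m = 1"
  proof (rule ccontr)
    assume "\<not> ?thesis"
    then have "2 * 2 \<le> k * m"
      using \<open>0 < k\<close> \<open>0 < m\<close> by (intro mult_mono) auto
    then show False
      using \<open>k * m < 4\<close> by simp
  qed
  then show ?thesis
  proof
    assume "k = 1"
    then have "refl b a = a - b"
      unfolding refl_def k by simp
    then show ?thesis
      using refl_root[OF b a] by simp
  next
    assume "m = 1"
    then have "refl a b = - (a - b)"
      unfolding refl_def m by simp
    then show ?thesis
      using uminus_root[OF refl_root[OF a b]] by simp
  qed
qed

lemma root_le_if_diff:
  assumes "p \<in> P" "q \<in> P" "x - y = of_nat m *\<^sub>R p + of_nat n *\<^sub>R q"
  shows "root_le \<Phi> \<Delta> y x"
proof -
  let ?c = "\<lambda>r. (if r = p then m else 0) + (if r = q then n else 0)"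
  have "(\<Sum>r\<in>P. of_nat (?c r) *\<^sub>R r)
      = (\<Sum>r\<in>P. (if r = p then of_nat m else 0) *\<^sub>R r + (if r = q then of_nat n else 0) *\<^sub>R r)"
    by (rule sum.cong) (auto simp: scaleR_add_left)
  also have "\<dots> = (\<Sum>r\<in>P. (if r = p then of_nat m else 0) *\<^sub>R r)
      + (\<Sum>r\<in>P. (if r = q then of_nat n else 0) *\<^sub>R r)"
    by (rule sum.distrib)
  also have "\<dots> = x - y"
    using assms by (simp add: sum_if_eq_scaleR[OF finite_pos_roots])
  finally show ?thesis
    unfolding root_le_def by (intro exI[of _ ?c]) simp
qed

lemma weyl_group_two_rho:
  assumes "w \<in> weyl_group \<Phi>"
  shows "w (two_rho \<Phi> \<Delta>) = (\<Sum>x\<in>P. if x \<in> inversions \<Phi> \<Delta> w then - x else x)"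
proof -
  let ?sign = "\<lambda>x. if x \<in> inversions \<Phi> \<Delta> w then - x else x"
  have "w p = ?sign (abs_root (w p))" if p: "p \<in> P" for p
  proof -
    have "inv w (- w p) = - p"
      using weyl_group_uminus[OF inv_mem_weyl_group[OF assms]] weyl_group_inv_apply[OF assms]
      by simp
    moreover have "w p \<in> \<Phi>"
      using weyl_group_root[OF assms] p pos_roots_subset by blast
    ultimately show ?thesis
      using p weyl_group_inv_apply[OF assms, of p] pos_roots_disjoint_neg[of p]
        root_pos_or_neg[of "w p"]
      by (auto simp: abs_root_def inversions_def neg_roots_iff)
  qed
  then have "w (two_rho \<Phi> \<Delta>) = (\<Sum>p\<in>P. ?sign (abs_root (w p)))"
    using orthogonal_transformation_linear[OF weyl_group_orthogonal[OF assms]]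
    by (simp add: two_rho_def linear_sum)
  also have "\<dots> = (\<Sum>x\<in>P. ?sign x)"
    by (rule sum.reindex_bij_betw[OF abs_root_weyl_bij[OF assms]])
  finally show ?thesis .
qed

end

locale maximal_inversion = based_root_system +
  fixes w :: "'a \<Rightarrow> 'a" and \<gamma> :: 'a
  assumes weyl: "w \<in> weyl_group \<Phi>" and maximal: "\<gamma> \<in> maxinv \<Phi> \<Delta> w"
begin

abbreviation "I \<equiv> inversions \<Phi> \<Delta> w"
abbreviation "I' \<equiv> inversions \<Phi> \<Delta> (refl \<gamma> \<circ> w)"

definition coroot_pairing :: "'a \<Rightarrow> real" where
  "coroot_pairing x = x \<bullet> coroot \<gamma>"

lemma gamma_inversion: "\<gamma> \<in> I"
  using maximal by (simp add: maxinv_def)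

lemma inversions_iff: "x \<in> I \<longleftrightarrow> x \<in> P \<and> inv w x \<in> N"
  by (simp add: inversions_def)

lemma gamma_pos: "\<gamma> \<in> P"
  using gamma_inversion inversions_iff by blast

lemma gamma_root: "\<gamma> \<in> \<Phi>"
  using gamma_pos pos_roots_subset by blast

lemma inv_weyl: "inv w \<in> weyl_group \<Phi>"
  by (rule inv_mem_weyl_group[OF weyl])

lemma linear_inv_weyl: "linear (inv w)"
  by (rule orthogonal_transformation_linear[OF weyl_group_orthogonal[OF inv_weyl]])

lemma inversions_refl_iff: "x \<in> I' \<longleftrightarrow> x \<in> P \<and> inv w (refl \<gamma> x) \<in> N"
proof -
  have "bij (refl \<gamma>)" "bij w"
    using orthogonal_transformation_bij orthogonal_transformation_refl
      weyl_group_orthogonal[OF weyl] by blast+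
  then show ?thesis
    by (simp add: inversions_def o_inv_distrib inv_refl)
qed

lemma not_inversion_if_above_gamma: "a \<noteq> \<gamma> \<Longrightarrow> root_le \<Phi> \<Delta> \<gamma> a \<Longrightarrow> a \<notin> I"
  using maximal by (auto simp: maxinv_def)

lemma inversion_if_nonneg_comb:
  assumes "x \<in> P" "nonneg_comb \<Delta> (- inv w x)"
  shows "x \<in> I"
proof -
  have "inv w x \<in> \<Phi>"
    using weyl_group_root[OF inv_weyl] assms(1) pos_roots_subset by blast
  then have "- inv w x \<in> P"
    using root_pos_if_nonneg_comb[OF uminus_root] assms(2) by blast
  then show ?thesis
    using assms(1) by (simp add: inversions_iff neg_roots_iff)
qed

lemma refl_gamma_eq: "refl \<gamma> x = x - coroot_pairing x *\<^sub>R \<gamma>"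
  by (simp add: refl_def coroot_pairing_def coroot_def)

lemma coroot_pairing_gamma: "coroot_pairing \<gamma> = 2"
  using gamma_root zero_not_root by (auto simp: coroot_pairing_def coroot_def)

lemma coroot_pairing_uminus: "coroot_pairing (- x) = - coroot_pairing x"
  by (simp add: coroot_pairing_def)

lemma coroot_pairing_refl_gamma: "coroot_pairing (refl \<gamma> x) = - coroot_pairing x"
  using coroot_pairing_gamma by (simp add: refl_gamma_eq coroot_pairing_def inner_diff_left)

lemma coroot_pairing_int:
  assumes "x \<in> \<Phi>"
  obtains k :: int where "coroot_pairing x = of_int k"
  using cartan_integer[OF gamma_root assms]
  by (auto simp: coroot_pairing_def coroot_def elim: Ints_cases)

lemma refl_gamma_neq_gamma: "a \<in> P \<Longrightarrow> refl \<gamma> a \<noteq> \<gamma>"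
  using gamma_pos pos_roots_disjoint_neg neg_roots_iff
  by (metis refl_refl refl_self)

lemma uminus_refl_gamma_neq_gamma: "a \<noteq> \<gamma> \<Longrightarrow> - refl \<gamma> a \<noteq> \<gamma>"
  by (metis linear_neg minus_minus refl_linear refl_refl refl_self)

lemma not_inversion_if_coroot_pairing_neg:
  assumes a: "a \<in> P" and neg: "coroot_pairing a < 0"
  shows "refl \<gamma> a \<in> P" "refl \<gamma> a \<notin> I" "a \<notin> I"
proof -
  have a_root: "a \<in> \<Phi>"
    using a pos_roots_subset by blast
  obtain k :: int where k: "coroot_pairing a = of_int k"
    using coroot_pairing_int[OF a_root] by blast
  have k_neg: "k \<le> -1"
    using neg k by simp
  have eq: "refl \<gamma> a = a + of_int (- k) *\<^sub>R \<gamma>"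
    by (simp add: refl_gamma_eq k)
  have "nonneg_comb \<Delta> (refl \<gamma> a)"
    unfolding eq using k_neg
    by (intro nonneg_comb_add nonneg_comb_scaleR pos_roots_nonneg_comb a gamma_pos) simp
  then show pos: "refl \<gamma> a \<in> P"
    using root_pos_if_nonneg_comb refl_root[OF gamma_root a_root] by blast
  have "refl \<gamma> a - \<gamma> = of_nat 1 *\<^sub>R a + of_nat (nat (- k - 1)) *\<^sub>R \<gamma>"
    using k_neg by (simp add: eq algebra_simps of_nat_nat)
  then have "root_le \<Phi> \<Delta> \<gamma> (refl \<gamma> a)"
    by (rule root_le_if_diff[OF a gamma_pos])
  then show not_inv: "refl \<gamma> a \<notin> I"
    using not_inversion_if_above_gamma refl_gamma_neq_gamma[OF a] by blast
  show "a \<notin> I"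
  proof
    assume "a \<in> I"
    then have "nonneg_comb \<Delta> (- inv w a + of_int (- k) *\<^sub>R (- inv w \<gamma>))"
      using k_neg gamma_inversion
      by (intro nonneg_comb_add nonneg_comb_scaleR pos_roots_nonneg_comb)
         (auto simp: inversions_iff neg_roots_iff)
    moreover have "- inv w (refl \<gamma> a) = - inv w a + of_int (- k) *\<^sub>R (- inv w \<gamma>)"
      by (simp add: eq linear_diff[OF linear_inv_weyl] linear_scale[OF linear_inv_weyl])
    ultimately have "refl \<gamma> a \<in> I"
      using inversion_if_nonneg_comb[OF pos] by simp
    then show False
      using not_inv by blast
  qed
qed

lemma not_inversion_if_refl_pos:
  assumes "a \<in> P" "refl \<gamma> a \<in> P" "coroot_pairing a \<noteq> 0"
  shows "a \<notin> I" "a \<notin> I'"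
proof -
  have "a \<notin> I \<and> refl \<gamma> a \<notin> I"
  proof (cases "coroot_pairing a < 0")
    case True
    then show ?thesis
      using not_inversion_if_coroot_pairing_neg[OF assms(1)] by blast
  next
    case False
    then have "coroot_pairing (refl \<gamma> a) < 0"
      using assms(3) coroot_pairing_refl_gamma by simp
    then show ?thesis
      using not_inversion_if_coroot_pairing_neg[OF assms(2)] by simp
  qed
  then show "a \<notin> I" "a \<notin> I'"
    using assms(2) by (auto simp: inversions_iff inversions_refl_iff)
qed

lemma coroot_pairing_pos_if_refl_not_pos:
  assumes "a \<in> P" "refl \<gamma> a \<notin> P"
  shows "0 < coroot_pairing a"
proof (rule ccontr)
  assume "\<not> 0 < coroot_pairing a"
  then have "nonneg_comb \<Delta> (a + (- coroot_pairing a) *\<^sub>R \<gamma>)"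
    by (intro nonneg_comb_add nonneg_comb_scaleR pos_roots_nonneg_comb assms(1) gamma_pos) simp
  moreover have "refl \<gamma> a = a + (- coroot_pairing a) *\<^sub>R \<gamma>"
    by (simp add: refl_gamma_eq)
  ultimately have "refl \<gamma> a \<in> P"
    using root_pos_if_nonneg_comb refl_root[OF gamma_root] assms(1) pos_roots_subset
    by (metis subsetD)
  then show False
    using assms(2) by blast
qed

lemma uminus_refl_pos_if_refl_not_pos:
  assumes "a \<in> P" "refl \<gamma> a \<notin> P"
  shows "- refl \<gamma> a \<in> P"
  using assms root_pos_or_neg[OF refl_root[OF gamma_root]] pos_roots_subset neg_roots_iff by blast

lemma inversion_refl_iff_if_refl_not_pos:
  assumes "a \<in> P" "refl \<gamma> a \<notin> P"
  shows "a \<in> I' \<longleftrightarrow> - refl \<gamma> a \<notin> I"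
proof -
  let ?b = "- refl \<gamma> a"
  have b: "?b \<in> P"
    by (rule uminus_refl_pos_if_refl_not_pos[OF assms])
  then have "inv w ?b \<in> \<Phi>"
    using weyl_group_root[OF inv_weyl] pos_roots_subset by blast
  then have "inv w ?b \<in> P \<longleftrightarrow> inv w ?b \<notin> N"
    using root_pos_or_neg pos_roots_disjoint_neg by blast
  then show ?thesis
    using assms(1) b
    by (simp add: inversions_refl_iff inversions_iff neg_roots_iff linear_neg[OF linear_inv_weyl])
qed

lemma inversion_or_if_refl_not_pos:
  assumes "a \<in> P" "refl \<gamma> a \<notin> P"
  shows "a \<in> I \<or> - refl \<gamma> a \<in> I"
proof (rule ccontr)
  let ?b = "- refl \<gamma> a"
  assume "\<not> ?thesis"
  moreover have b: "?b \<in> P"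
    by (rule uminus_refl_pos_if_refl_not_pos[OF assms])
  moreover have "inv w ?b \<in> \<Phi>"
    using b weyl_group_root[OF inv_weyl] pos_roots_subset by blast
  ultimately have "inv w ?b \<in> P"
    using root_pos_or_neg inversions_iff by blast
  moreover have "- inv w a = coroot_pairing a *\<^sub>R (- inv w \<gamma>) + inv w ?b"
    by (simp add: refl_gamma_eq linear_diff[OF linear_inv_weyl] linear_scale[OF linear_inv_weyl]
        linear_neg[OF linear_inv_weyl])
  moreover have "nonneg_comb \<Delta> (coroot_pairing a *\<^sub>R (- inv w \<gamma>) + inv w ?b)"
    using coroot_pairing_pos_if_refl_not_pos[OF assms] gamma_inversion \<open>inv w ?b \<in> P\<close>
    by (intro nonneg_comb_add nonneg_comb_scaleR pos_roots_nonneg_comb)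
       (auto simp: inversions_iff neg_roots_iff)
  ultimately have "nonneg_comb \<Delta> (- inv w a)"
    by simp
  then have "a \<in> I"
    by (rule inversion_if_nonneg_comb[OF assms(1)])
  with \<open>\<not> ?thesis\<close> show False
    by blast
qed

lemma coroot_pairing_eq_1_if_inversions:
  assumes a: "a \<in> P" "a \<noteq> \<gamma>" "refl \<gamma> a \<notin> P"
    and inv: "a \<in> I" "- refl \<gamma> a \<in> I"
  shows "coroot_pairing a = 1"
proof (rule ccontr)
  assume "coroot_pairing a \<noteq> 1"
  let ?b = "- refl \<gamma> a"
  have a_root: "a \<in> \<Phi>"
    using a(1) pos_roots_subset by blast
  obtain k :: int where k: "coroot_pairing a = of_int k"
    using coroot_pairing_int[OF a_root] by blast
  have "0 < coroot_pairing a"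
    by (rule coroot_pairing_pos_if_refl_not_pos[OF a(1,3)])
  with \<open>coroot_pairing a \<noteq> 1\<close> have k2: "2 \<le> k"
    using k by simp
  have "0 < \<gamma> \<bullet> \<gamma>"
    using gamma_root zero_not_root by auto
  moreover have "a \<bullet> \<gamma> = coroot_pairing a * (\<gamma> \<bullet> \<gamma>) / 2"
    using \<open>0 < \<gamma> \<bullet> \<gamma>\<close> by (simp add: coroot_pairing_def coroot_def)
  moreover have "0 < coroot_pairing a * (\<gamma> \<bullet> \<gamma>) / 2"
    using \<open>0 < coroot_pairing a\<close> \<open>0 < \<gamma> \<bullet> \<gamma>\<close> by (intro divide_pos_pos mult_pos_pos) auto
  ultimately have "0 < a \<bullet> \<gamma>"
    by (simp only:)
  then have diff_root: "a - \<gamma> \<in> \<Phi>"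
    by (rule diff_root_if_inner_pos[OF a_root gamma_root a(2)])
  show False
  proof (cases "a - \<gamma> \<in> P")
    case True
    have "a - \<gamma> = of_nat 1 *\<^sub>R (a - \<gamma>) + of_nat 0 *\<^sub>R \<gamma>"
      by simp
    then have "root_le \<Phi> \<Delta> \<gamma> a"
      by (rule root_le_if_diff[OF True gamma_pos])
    then show False
      using not_inversion_if_above_gamma a(2) inv(1) by blast
  next
    case False
    then have "\<gamma> - a \<in> P"
      using root_pos_or_neg[OF diff_root] neg_roots_iff by simp
    moreover have "?b - \<gamma> = of_nat (nat (k - 2)) *\<^sub>R \<gamma> + of_nat 1 *\<^sub>R (\<gamma> - a)"
      using k2 by (simp add: refl_gamma_eq k algebra_simps of_nat_nat scaleR_2)
    ultimately have "root_le \<Phi> \<Delta> \<gamma> ?b"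
      by (rule root_le_if_diff[OF gamma_pos])
    moreover have "?b \<noteq> \<gamma>"
      by (rule uminus_refl_gamma_neq_gamma[OF a(2)])
    ultimately show False
      using not_inversion_if_above_gamma inv(2) by blast
  qed
qed

definition signed_pairing :: "'a \<Rightarrow> real" where
  "signed_pairing a = (if a \<in> I then coroot_pairing a else - coroot_pairing a)"

text \<open>Summed over the positive roots, the defect is \<open>|I'| - |I| + \<Sum> signed_pairing\<close>;
  the involution \<open>a \<mapsto> |s\<^sub>\<gamma> a|\<close> of the positive roots other than \<open>\<gamma>\<close> cancels it
  in pairs.\<close>

definition defect :: "'a \<Rightarrow> real" where
  "defect a = of_bool (a \<in> I') - of_bool (a \<in> I) + signed_pairing a"

lemma defect_gamma: "defect \<gamma> = 1"
proof -
  have "inv w (refl \<gamma> \<gamma>) \<notin> N"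
    using gamma_inversion pos_root_uminus_not_pos[of "- inv w \<gamma>"]
    by (simp add: refl_self linear_neg[OF linear_inv_weyl] inversions_iff neg_roots_iff)
  then show ?thesis
    using gamma_inversion coroot_pairing_gamma
    by (simp add: defect_def signed_pairing_def inversions_refl_iff)
qed

lemma defect_partner_refl_pos:
  assumes "a \<in> P" "refl \<gamma> a \<in> P"
  shows "defect a + defect (refl \<gamma> a) = 0"
proof (cases "coroot_pairing a = 0")
  case True
  then have "refl \<gamma> a = a"
    by (simp add: refl_gamma_eq)
  then show ?thesis
    using True assms(1) by (simp add: defect_def signed_pairing_def inversions_iff inversions_refl_iff)
next
  case False
  then have "coroot_pairing (refl \<gamma> a) \<noteq> 0"
    by (simp add: coroot_pairing_refl_gamma)
  then show ?thesis
    using not_inversion_if_refl_pos[OF assms False] not_inversion_if_refl_pos[OF assms(2)] assms(1)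
    by (simp add: defect_def signed_pairing_def coroot_pairing_refl_gamma)
qed

lemma defect_partner_refl_not_pos:
  assumes a: "a \<in> P" "a \<noteq> \<gamma>" "refl \<gamma> a \<notin> P"
  shows "defect a + defect (- refl \<gamma> a) = 0"
proof -
  let ?b = "- refl \<gamma> a"
  have b: "?b \<in> P" "?b \<noteq> \<gamma>" "refl \<gamma> ?b \<notin> P" "- refl \<gamma> ?b = a"
    using uminus_refl_pos_if_refl_not_pos[OF a(1,3)] uminus_refl_gamma_neq_gamma[OF a(2)]
      pos_root_uminus_not_pos[OF a(1)]
    by (auto simp: linear_neg[OF refl_linear])
  have "coroot_pairing ?b = coroot_pairing a"
    by (simp add: coroot_pairing_uminus coroot_pairing_refl_gamma)
  then show ?thesis
    using inversion_refl_iff_if_refl_not_pos[OF a(1,3)]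
      inversion_refl_iff_if_refl_not_pos[OF b(1,3)]
      inversion_or_if_refl_not_pos[OF a(1,3)] coroot_pairing_eq_1_if_inversions[OF a] b(4)
    by (auto simp: defect_def signed_pairing_def)
qed

lemma sum_defect: "(\<Sum>a\<in>P. defect a) = 1"
proof -
  let ?t = "\<lambda>a. abs_root (refl \<gamma> a)"
  have refl_weyl: "refl \<gamma> \<in> weyl_group \<Phi>"
    using refl_word_mem_weyl_group[of "[\<gamma>]"] gamma_root by simp
  have "(\<Sum>a\<in>P - {\<gamma>}. defect a) = 0"
  proof (rule sum_involution_eq_0')
    fix a assume a: "a \<in> P - {\<gamma>}"
    then have "?t a \<in> P"
      using abs_root_pos refl_root[OF gamma_root] pos_roots_subset by blast
    moreover have "?t a \<noteq> \<gamma>"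
      using a refl_gamma_neq_gamma uminus_refl_gamma_neq_gamma by (auto simp: abs_root_def)
    ultimately show "?t a \<in> P - {\<gamma>}"
      by blast
    show "?t (?t a) = a"
      using abs_root_inv_abs_root[OF refl_weyl] a by (simp add: inv_refl)
    show "defect a + defect (?t a) = 0"
      using defect_partner_refl_pos defect_partner_refl_not_pos a by (auto simp: abs_root_def)
  qed (simp add: finite_pos_roots)
  then show ?thesis
    using sum.remove[OF finite_pos_roots gamma_pos, of defect] defect_gamma by simp
qed

lemma card_inversions_refl_gamma:
  "real (card I') = real (card I) + 1 - (\<Sum>a\<in>P. signed_pairing a)"
proof -
  have "P \<inter> {a. a \<in> I} = I" "P \<inter> {a. a \<in> I'} = I'"
    by (auto simp: inversions_def)
  then have "(\<Sum>a\<in>P. defect a)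
      = real (card I') - real (card I) + (\<Sum>a\<in>P. signed_pairing a)"
    using finite_pos_roots by (simp add: defect_def sum.distrib sum_subtractf)
  then show ?thesis
    using sum_defect by simp
qed

lemma coroot_two_rho:
  "coroot (- inv w \<gamma>) \<bullet> two_rho \<Phi> \<Delta> = (\<Sum>a\<in>P. signed_pairing a)"
proof -
  have orth: "orthogonal_transformation (inv w)"
    by (rule weyl_group_orthogonal[OF inv_weyl])
  have "coroot (- inv w \<gamma>) = - inv w (coroot \<gamma>)"
    using orth by (simp add: coroot_def orthogonal_transformation_def linear_scale linear_neg)
  then have "coroot (- inv w \<gamma>) \<bullet> two_rho \<Phi> \<Delta> = - (coroot \<gamma> \<bullet> w (two_rho \<Phi> \<Delta>))"
    using weyl_group_orthogonal[OF weyl] weyl_group_apply_inv[OF weyl]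
    by (metis inner_minus_left orthogonal_transformation_def)
  also have "\<dots> = - (\<Sum>a\<in>P. if a \<in> I then - coroot_pairing a else coroot_pairing a)"
    by (simp add: weyl_group_two_rho[OF weyl] inner_sum_right coroot_pairing_def inner_commute
        if_distrib[of "\<lambda>x. coroot \<gamma> \<bullet> x"] cong: if_cong)
  also have "\<dots> = (\<Sum>a\<in>P. signed_pairing a)"
    unfolding sum_negf[symmetric] by (intro sum.cong) (auto simp: signed_pairing_def)
  finally show ?thesis .
qed

end

theorem lemma3p11:
  fixes \<Phi> \<Delta> :: "'a::euclidean_space set" and w :: "'a \<Rightarrow> 'a" and \<gamma> \<beta> :: 'a
  assumes "root_system \<Phi>" and "root_basis \<Phi> \<Delta>"
    and "w \<in> weyl_group \<Phi>" and "\<gamma> \<in> maxinv \<Phi> \<Delta> w"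
    and "\<beta> = - inv w \<gamma>"
  shows "\<beta> \<in> pos_roots \<Phi> \<Delta> \<and> refl \<gamma> \<circ> w = w \<circ> refl \<beta> \<and>
         real (wlength \<Delta> (w \<circ> refl \<beta>)) = real (wlength \<Delta> w) + 1 - coroot \<beta> \<bullet> two_rho \<Phi> \<Delta>"
proof -
  interpret maximal_inversion \<Phi> \<Delta> w \<gamma>
    using assms(1-4) by unfold_locales
  have "\<beta> \<in> P"
    using gamma_inversion assms(5) by (simp add: inversions_iff neg_roots_iff)
  moreover have "w \<circ> refl \<beta> = refl \<gamma> \<circ> w"
  proof -
    have "w \<beta> = - \<gamma>"
      using assms(5) weyl_group_uminus[OF weyl] weyl_group_apply_inv[OF weyl] by simp
    then show ?thesis
      using orthogonal_transformation_comp_refl[OF weyl_group_orthogonal[OF weyl]] by simp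
  qed
  moreover have "wlength \<Delta> (refl \<gamma> \<circ> w) = card I'" "wlength \<Delta> w = card I"
    using wlength_eq_card_inversions refl_comp_mem_weyl_group[OF gamma_root weyl] weyl by blast+
  ultimately show ?thesis
    using card_inversions_refl_gamma coroot_two_rho assms(5) by simp
qed

end
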